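(* Let $q>0$. If $L(q)$ contains a loop of odd length, then the weight $w_{q/n}$ is not unique for any integer $n\ge2$.
   Context: For $q>0$, $k\ge0$ and $\mathbf m=(m_0,\dots,m_k)\in\mathbb Z^{k+1}$ put $\mathbf m_j=(m_0,\dots,m_j)$; define $c(q,\mathbf m_0)=m_0$ and $c(q,\mathbf m_j)=m_j+\frac{1}{q\,c(q,\mathbf m_{j-1})}$ for $1\le j\le k$. $\mathbf m$ is a path for $q$ of length $k$ if $c(q,\mathbf m_j)\ne0$ for $0\le j\le k-1$. The weight of a path is $w_q(\mathbf m)=q^{k/2}\prod_{j=0}^{k-1}|c(q,\mathbf m_j)|$ (and $1$ if $k=0$). A loop is a path with $c(q,\mathbf m)=0$; $L(q)$ is the set of loops for $q$. The weight $w_q$ is unique if $w_q(\mathbf m)=w_q(\mathbf n)$ for all paths $\mathbf m,\mathbf n$ for $q$ with $c(q,\mathbf m)=c(q,\mathbf n)$. *)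

theory Defs
  imports Complex_Main
begin

text \<open>A tuple m = (m_0,...,m_k) is represented as an integer list of length k+1
  (so nonempty); its length as a path is k = length m - 1.
  cf q m j is c(q, m_j), the value for the prefix (m_0,...,m_j).\<close>

fun cf :: "real \<Rightarrow> int list \<Rightarrow> nat \<Rightarrow> real" where
  "cf q m 0 = of_int (m ! 0)"
| "cf q m (Suc j) = of_int (m ! Suc j) + 1 / (q * cf q m j)"

definition plen :: "int list \<Rightarrow> nat" where
  "plen m = length m - 1"

definition cval :: "real \<Rightarrow> int list \<Rightarrow> real" where
  "cval q m = cf q m (plen m)"

definition is_path :: "real \<Rightarrow> int list \<Rightarrow> bool" where
  "is_path q m \<longleftrightarrow> m \<noteq> [] \<and> (\<forall>j < plen m. cf q m j \<noteq> 0)"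

definition weight :: "real \<Rightarrow> int list \<Rightarrow> real" where
  "weight q m = sqrt q ^ plen m * (\<Prod>j<plen m. \<bar>cf q m j\<bar>)"

definition loops :: "real \<Rightarrow> int list set" where
  "loops q = {m. is_path q m \<and> cval q m = 0}"

definition weight_unique :: "real \<Rightarrow> bool" where
  "weight_unique q \<longleftrightarrow>
     (\<forall>m n. is_path q m \<longrightarrow> is_path q n \<longrightarrow> cval q m = cval q n \<longrightarrow> weight q m = weight q n)"

end

theory Submission
  imports Defs
begin

text \<open>Multiplying the entries of a loop for \<open>q\<close> at every other position by \<open>n\<close> gives a loop
  for \<open>q/n\<close>: the continued-fraction values get multiplied by \<open>n\<close> at exactly those positions.
  Scaling the even positions and scaling the odd positions yields two loops for \<open>q/n\<close>; for a
  loop of odd length \<open>k = 2t+1\<close> there are \<open>t+1\<close> even and \<open>t\<close> odd positions below \<open>k\<close>, so the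
  two weights differ by the factor \<open>n\<close>.\<close>

definition scale_parity :: "bool \<Rightarrow> int \<Rightarrow> int list \<Rightarrow> int list" where
  "scale_parity p n m = map (\<lambda>i. if even i = p then n * m ! i else m ! i) [0..<length m]"

lemma length_scale_parity [simp]: "length (scale_parity p n m) = length m"
  by (simp add: scale_parity_def)

lemma plen_scale_parity [simp]: "plen (scale_parity p n m) = plen m"
  by (simp add: plen_def)

lemma nth_scale_parity:
  "i < length m \<Longrightarrow> scale_parity p n m ! i = (if even i = p then n * m ! i else m ! i)"
  by (simp add: scale_parity_def)

lemma cf_scale_parity:
  assumes "n \<noteq> 0" and "j < length m"
  shows "cf (q / of_int n) (scale_parity p n m) j = (if even j = p then of_int n else 1) * cf q m j"
  using assms(2)
proof (induction j)
  case 0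
  then show ?case by (simp add: nth_scale_parity)
next
  case (Suc j)
  then show ?case
    using assms(1) by (simp add: nth_scale_parity field_simps)
qed

lemma is_path_scale_parity:
  assumes "n \<noteq> 0" and "is_path q m"
  shows "is_path (q / of_int n) (scale_parity p n m)"
proof -
  have "plen m < length m"
    using assms(2) by (simp add: is_path_def plen_def)
  then show ?thesis
    using assms by (auto simp: is_path_def cf_scale_parity simp flip: length_0_conv)
qed

lemma loops_scale_parity:
  assumes "n \<noteq> 0" and "m \<in> loops q"
  shows "scale_parity p n m \<in> loops (q / of_int n)"
proof -
  have "is_path q m" and "cval q m = 0"
    using assms(2) by (auto simp: loops_def)
  moreover from \<open>is_path q m\<close> have "plen m < length m"
    by (simp add: is_path_def plen_def)
  ultimately show ?thesis
    using assms(1) by (simp add: loops_def is_path_scale_parity cval_def cf_scale_parity)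
qed

lemma weight_pos:
  assumes "q > 0" and "is_path q m"
  shows "weight q m > 0"
  using assms by (auto simp: weight_def is_path_def intro!: mult_pos_pos prod_pos)

lemma prod_parity_odd_length:
  "(\<Prod>j<Suc (2 * t). if even j = p then a else 1) = a ^ (if p then Suc t else t)"
  by (induction t) (auto simp: mult_ac)

lemma weight_scale_parity_odd_length:
  assumes "n \<noteq> 0" and "m \<noteq> []" and "odd (plen m)"
  shows "weight (q / of_int n) (scale_parity True n m)
           = \<bar>of_int n\<bar> * weight (q / of_int n) (scale_parity False n m)"
proof -
  obtain t where t: "plen m = Suc (2 * t)"
    using assms(3) by (metis oddE Suc_eq_plus1)
  have "plen m < length m"
    using assms(2) by (simp add: plen_def)
  have prod_eq: "(\<Prod>j<plen m. \<bar>cf (q / of_int n) (scale_parity p n m) j\<bar>)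
      = \<bar>of_int n\<bar> ^ (if p then Suc t else t) * (\<Prod>j<plen m. \<bar>cf q m j\<bar>)" for p
  proof -
    have "(\<Prod>j<plen m. \<bar>cf (q / of_int n) (scale_parity p n m) j\<bar>)
        = (\<Prod>j<plen m. (if even j = p then \<bar>of_int n\<bar> else 1) * \<bar>cf q m j\<bar>)"
      using \<open>plen m < length m\<close> assms(1) by (intro prod.cong) (auto simp: cf_scale_parity abs_mult)
    also have "\<dots> = (\<Prod>j<plen m. if even j = p then \<bar>of_int n\<bar> else 1) * (\<Prod>j<plen m. \<bar>cf q m j\<bar>)"
      by (rule prod.distrib)
    finally show ?thesis
      unfolding t prod_parity_odd_length .
  qed
  show ?thesis
    by (simp add: weight_def prod_eq mult_ac)
qed

theorem corollary3:
  fixes q :: real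
  assumes "q > 0"
    and "\<exists>m \<in> loops q. odd (plen m)"
  shows "\<forall>n::int. n \<ge> 2 \<longrightarrow> \<not> weight_unique (q / of_int n)"
proof (intro allI impI)
  fix n :: int
  assume "n \<ge> 2"
  then have "n \<noteq> 0" and q_div_pos: "q / of_int n > 0"
    using assms(1) by auto
  obtain m where "m \<in> loops q" and "odd (plen m)"
    using assms(2) by blast
  then have "m \<noteq> []"
    by (simp add: loops_def is_path_def)
  have loop_even: "scale_parity True n m \<in> loops (q / of_int n)"
    and loop_odd: "scale_parity False n m \<in> loops (q / of_int n)"
    using \<open>n \<noteq> 0\<close> \<open>m \<in> loops q\<close> by (simp_all add: loops_scale_parity)
  have "weight (q / of_int n) (scale_parity False n m) > 0"
    using loop_odd q_div_pos by (simp add: loops_def weight_pos)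
  moreover have "\<bar>real_of_int n\<bar> \<noteq> 1"
    using \<open>n \<ge> 2\<close> by simp
  ultimately have "weight (q / of_int n) (scale_parity True n m)
                     \<noteq> weight (q / of_int n) (scale_parity False n m)"
    unfolding weight_scale_parity_odd_length[OF \<open>n \<noteq> 0\<close> \<open>m \<noteq> []\<close> \<open>odd (plen m)\<close>]
    by simp
  moreover have "weight_unique (q / of_int n) \<Longrightarrow>
      weight (q / of_int n) (scale_parity True n m) = weight (q / of_int n) (scale_parity False n m)"
    using loop_even loop_odd by (simp add: weight_unique_def loops_def)
  ultimately show "\<not> weight_unique (q / of_int n)"
    by blast
qed

end
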